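(* Let $\Gamma=A\ast B$ with $A,B$ non-trivial, such that $A$ contains an element of infinite order. Then there is a linear isometric embedding $\mathcal{D}(\mathbb{Z})\hookrightarrow\mathrm{H}^2_\mathrm{b}(\Gamma,\mathbb{R})$. In particular, the Banach space $\mathrm{H}^2_\mathrm{b}(\Gamma,\mathbb{R})$ (with the Gromov norm) is non-separable.
   Context: For a group $G$, the defect space $\mathcal{D}(G)$ is the space of bounded alternating functions $f:G\to\mathbb{R}$ ($f(g^{-1})=-f(g)$) with the norm $\mathrm{def}\, f=\sup_{g,h}|f(g)+f(h)-f(gh)|$. The Gromov norm of the class $\omega_f\in\mathrm{H}^2_\mathrm{b}(\Gamma,\mathbb{R})$ of a quasimorphism $f$ (the bounded class of $\partial f(g,h)=f(g)+f(h)-f(gh)$) is $\inf\{\mathrm{def}\,(f+\beta):\beta\text{ bounded}\}$; in general it is the quotient seminorm from the bounded bar complex, which is a norm in degree 2. *)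

theory Defs
  imports "HOL-Algebra.Group" Complex_Main "HOL-Library.Countable_Set"
begin

definition reduced_word :: "('g, 'm) monoid_scheme \<Rightarrow> 'g set \<Rightarrow> 'g set \<Rightarrow> (bool \<times> 'g) list \<Rightarrow> bool" where
  "reduced_word G A B ws \<longleftrightarrow>
     (\<forall>(t, x) \<in> set ws. x \<in> (if t then A else B) \<and> x \<noteq> \<one>\<^bsub>G\<^esub>) \<and>
     (\<forall>i. Suc i < length ws \<longrightarrow> fst (ws ! i) \<noteq> fst (ws ! Suc i))"

definition word_eval :: "('g, 'm) monoid_scheme \<Rightarrow> (bool \<times> 'g) list \<Rightarrow> 'g" where
  "word_eval G ws = foldr (\<lambda>(t, x) y. x \<otimes>\<^bsub>G\<^esub> y) ws \<one>\<^bsub>G\<^esub>"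

definition is_free_product :: "('g, 'm) monoid_scheme \<Rightarrow> 'g set \<Rightarrow> 'g set \<Rightarrow> bool" where
  "is_free_product G A B \<longleftrightarrow> group G \<and> subgroup A G \<and> subgroup B G \<and>
     bij_betw (word_eval G) {ws. reduced_word G A B ws} (carrier G)"

definition defect :: "(int \<Rightarrow> real) \<Rightarrow> real" where
  "defect f = (SUP (m, n) \<in> UNIV. \<bar>f m + f n - f (m + n)\<bar>)"

definition defect_space_Z :: "(int \<Rightarrow> real) set" where
  "defect_space_Z = {f. (\<exists>C. \<forall>n. \<bar>f n\<bar> \<le> C) \<and> (\<forall>n. f (- n) = - f n)}"

section \<open>Second bounded cohomology (inhomogeneous bar complex)\<close>

definition bounded1 :: "('g, 'm) monoid_scheme \<Rightarrow> ('g \<Rightarrow> real) \<Rightarrow> bool" where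
  "bounded1 G b \<longleftrightarrow> (\<exists>C. \<forall>g \<in> carrier G. \<bar>b g\<bar> \<le> C)"

definition bounded2 :: "('g, 'm) monoid_scheme \<Rightarrow> ('g \<Rightarrow> 'g \<Rightarrow> real) \<Rightarrow> bool" where
  "bounded2 G c \<longleftrightarrow> (\<exists>C. \<forall>g \<in> carrier G. \<forall>h \<in> carrier G. \<bar>c g h\<bar> \<le> C)"

definition cobound1 :: "('g, 'm) monoid_scheme \<Rightarrow> ('g \<Rightarrow> real) \<Rightarrow> 'g \<Rightarrow> 'g \<Rightarrow> real" where
  "cobound1 G b g h = b g + b h - b (g \<otimes>\<^bsub>G\<^esub> h)"

definition bcocycle2 :: "('g, 'm) monoid_scheme \<Rightarrow> ('g \<Rightarrow> 'g \<Rightarrow> real) \<Rightarrow> bool" where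
  "bcocycle2 G c \<longleftrightarrow> bounded2 G c \<and>
     (\<forall>g1 \<in> carrier G. \<forall>g2 \<in> carrier G. \<forall>g3 \<in> carrier G.
        c g2 g3 - c (g1 \<otimes>\<^bsub>G\<^esub> g2) g3 + c g1 (g2 \<otimes>\<^bsub>G\<^esub> g3) - c g1 g2 = 0)"

definition bcohomologous :: "('g, 'm) monoid_scheme \<Rightarrow> ('g \<Rightarrow> 'g \<Rightarrow> real) \<Rightarrow> ('g \<Rightarrow> 'g \<Rightarrow> real) \<Rightarrow> bool" where
  "bcohomologous G c1 c2 \<longleftrightarrow> (\<exists>b. bounded1 G b \<and>
     (\<forall>g \<in> carrier G. \<forall>h \<in> carrier G. c1 g h - c2 g h = cobound1 G b g h))"

definition gromov_norm :: "('g, 'm) monoid_scheme \<Rightarrow> ('g \<Rightarrow> 'g \<Rightarrow> real) \<Rightarrow> real" where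
  "gromov_norm G c = Inf {(SUP (g, h) \<in> carrier G \<times> carrier G. \<bar>c g h + cobound1 G b g h\<bar>) | b. bounded1 G b}"

end

theory Submission
  imports Defs "HOL-Algebra.Multiplicative_Group"
begin

text \<open>
  For f in D(Z) and a in A of infinite order, the function that sends a^k to f(k) and vanishes
  off the cyclic subgroup generated by a is an alternating quasimorphism of defect def f.
  Summing it over the A-syllables of reduced words extends it to a quasimorphism F_f of
  A * B, still of defect at most def f, and f \<mapsto> \<delta>F_f is linear; this bounds the Gromov
  norm of [\<delta>F_f] by def f.

  Conversely, if F_f + \<beta> has defect E for some bounded \<beta>, antisymmetrising \<beta> gives an
  alternating quasimorphism \<psi> within bounded distance of F_f with
  |\<psi>(g^N) + \<psi>(h^N) - \<psi>((gh)^N)| \<le> (2N + 2) E. For b in B - {1}, the elements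
  g = (a^m b)^2 and h = (b^-1 a^n)^2 have a product conjugate to the cyclically reduced word
  b a^(m+n) b^-1 a^(m+n), and F_f grows exactly linearly along the powers of g, h and that word,
  with slopes 2 f(m), 2 f(n) and 2 f(m+n). Comparing growth rates gives
  f(m) + f(n) - f(m+n) \<le> E.

  Finally, the functions equal to \<plusminus>1 at \<plusminus>3^k for k in X and 0 elsewhere, X \<subseteq> N, form an
  uncountable family in D(Z) at mutual distance at least 2.
\<close>

section \<open>Alternating quasimorphisms\<close>

context group
begin

lemma mult_inv_cancel_left: "x \<in> carrier G \<Longrightarrow> y \<in> carrier G \<Longrightarrow> x \<otimes> (inv x \<otimes> y) = y"
  by (simp add: m_assoc[symmetric])

lemma inv_mult_cancel_left: "x \<in> carrier G \<Longrightarrow> y \<in> carrier G \<Longrightarrow> inv x \<otimes> (x \<otimes> y) = y"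
  by (simp add: m_assoc[symmetric])

definition alternating_qm :: "('a \<Rightarrow> real) \<Rightarrow> real \<Rightarrow> bool" where
  "alternating_qm \<phi> D \<longleftrightarrow> (\<forall>x \<in> carrier G. \<phi> (inv x) = - \<phi> x) \<and>
     (\<forall>x \<in> carrier G. \<forall>y \<in> carrier G. \<bar>cobound1 G \<phi> x y\<bar> \<le> D)"

lemma alternating_qm_inv: "alternating_qm \<phi> D \<Longrightarrow> x \<in> carrier G \<Longrightarrow> \<phi> (inv x) = - \<phi> x"
  by (simp add: alternating_qm_def)

lemma alternating_qm_cobound:
  "alternating_qm \<phi> D \<Longrightarrow> x \<in> carrier G \<Longrightarrow> y \<in> carrier G \<Longrightarrow> \<bar>\<phi> x + \<phi> y - \<phi> (x \<otimes> y)\<bar> \<le> D"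
  by (simp add: alternating_qm_def cobound1_def)

lemma alternating_qm_one: "alternating_qm \<phi> D \<Longrightarrow> \<phi> \<one> = 0"
  using alternating_qm_inv[of \<phi> D \<one>] by simp

lemma alternating_qm_nonneg: "alternating_qm \<phi> D \<Longrightarrow> 0 \<le> D"
  using alternating_qm_cobound[of \<phi> D \<one> \<one>] alternating_qm_one[of \<phi> D] by simp

lemma alternating_qm_commutator:
  assumes qm: "alternating_qm \<phi> D" and P: "P \<in> carrier G" and Q: "Q \<in> carrier G"
  shows "\<bar>\<phi> (P \<otimes> Q \<otimes> inv P \<otimes> inv Q)\<bar> \<le> 3 * D"
  using alternating_qm_cobound[OF qm P Q] alternating_qm_cobound[OF qm, of "P \<otimes> Q" "inv P"]
    alternating_qm_cobound[OF qm, of "P \<otimes> Q \<otimes> inv P" "inv Q"]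
    alternating_qm_inv[OF qm P] alternating_qm_inv[OF qm Q] P Q
  by (simp add: abs_le_iff)

lemma alternating_qm_conj:
  assumes qm: "alternating_qm \<phi> D" and c: "c \<in> carrier G" and x: "x \<in> carrier G"
  shows "\<bar>\<phi> (c \<otimes> x \<otimes> inv c) - \<phi> x\<bar> \<le> 2 * D"
  using alternating_qm_cobound[OF qm c x] alternating_qm_cobound[OF qm, of "c \<otimes> x" "inv c"]
    alternating_qm_inv[OF qm c] c x
  by (simp add: abs_le_iff)

lemma conj_nat_pow:
  "c \<in> carrier G \<Longrightarrow> x \<in> carrier G \<Longrightarrow> (c \<otimes> x \<otimes> inv c) [^] (N::nat) = c \<otimes> x [^] N \<otimes> inv c"
  by (induction N) (simp_all add: m_assoc inv_mult_cancel_left)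

lemma power_defect_word_Suc_Suc:
  assumes g: "g \<in> carrier G" and h: "h \<in> carrier G"
  obtains P Q where "P \<in> carrier G" "Q \<in> carrier G"
    "g [^] Suc (Suc N) \<otimes> h [^] Suc (Suc N) \<otimes> inv ((g \<otimes> h) [^] Suc (Suc N)) =
       (P \<otimes> Q \<otimes> inv P \<otimes> inv Q) \<otimes> (g [^] N \<otimes> h [^] N \<otimes> inv ((g \<otimes> h) [^] N))"
proof -
  define X Y T where "X = g [^] N" and "Y = h [^] N" and "T = (g \<otimes> h) [^] N"
  have X: "X \<in> carrier G" and Y: "Y \<in> carrier G" and T: "T \<in> carrier G"
    using g h by (auto simp: X_def Y_def T_def)
  have "h [^] Suc (Suc N) = h \<otimes> (Y \<otimes> h)"
    using nat_pow_Suc2[OF h, of N] h Y by (simp add: Y_def m_assoc)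
  then have "g [^] Suc (Suc N) \<otimes> h [^] Suc (Suc N) \<otimes> inv ((g \<otimes> h) [^] Suc (Suc N)) =
      (X \<otimes> g \<otimes> g) \<otimes> (h \<otimes> (Y \<otimes> h)) \<otimes> inv (T \<otimes> (g \<otimes> h) \<otimes> (g \<otimes> h))"
    by (simp add: X_def T_def)
  also have "\<dots> = ((X \<otimes> g \<otimes> inv Y \<otimes> inv X) \<otimes> (X \<otimes> Y \<otimes> g \<otimes> h \<otimes> inv X)
      \<otimes> inv (X \<otimes> g \<otimes> inv Y \<otimes> inv X) \<otimes> inv (X \<otimes> Y \<otimes> g \<otimes> h \<otimes> inv X)) \<otimes> (X \<otimes> Y \<otimes> inv T)"
    using g h X Y T by (simp add: m_assoc inv_mult_group mult_inv_cancel_left inv_mult_cancel_left)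
  finally show ?thesis
    using that[of "X \<otimes> g \<otimes> inv Y \<otimes> inv X" "X \<otimes> Y \<otimes> g \<otimes> h \<otimes> inv X"] g h X Y T
    by (simp add: X_def Y_def T_def)
qed

lemma alternating_qm_power_defect_word:
  assumes qm: "alternating_qm \<phi> D" and g: "g \<in> carrier G" and h: "h \<in> carrier G"
  shows "\<bar>\<phi> (g [^] N \<otimes> h [^] N \<otimes> inv ((g \<otimes> h) [^] N))\<bar> \<le> 2 * real N * D"
proof (induction N rule: nat_less_induct)
  case (1 N)
  consider "N = 0" | "N = 1" | K where "N = Suc (Suc K)"
    by (metis One_nat_def not0_implies_Suc)
  then show ?case
  proof cases
    case (3 K)
    define W where "W = g [^] K \<otimes> h [^] K \<otimes> inv ((g \<otimes> h) [^] K)"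
    obtain P Q where P: "P \<in> carrier G" and Q: "Q \<in> carrier G"
      and W: "g [^] N \<otimes> h [^] N \<otimes> inv ((g \<otimes> h) [^] N) = (P \<otimes> Q \<otimes> inv P \<otimes> inv Q) \<otimes> W"
      using power_defect_word_Suc_Suc[OF g h, of K] by (auto simp: 3 W_def)
    have "\<bar>\<phi> W\<bar> \<le> 2 * real K * D" using 1 3 by (simp add: W_def)
    moreover have "W \<in> carrier G" using g h by (simp add: W_def)
    ultimately show ?thesis
      unfolding W using alternating_qm_commutator[OF qm P Q]
        alternating_qm_cobound[OF qm, of "P \<otimes> Q \<otimes> inv P \<otimes> inv Q" W] P Q
      by (simp add: 3 abs_le_iff distrib_right)
  qed (use g h alternating_qm_one[OF qm] alternating_qm_nonneg[OF qm] in simp_all)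
qed

lemma alternating_qm_powers:
  assumes qm: "alternating_qm \<phi> D" and g: "g \<in> carrier G" and h: "h \<in> carrier G"
  shows "\<bar>\<phi> (g [^] N) + \<phi> (h [^] N) - \<phi> ((g \<otimes> h) [^] N)\<bar> \<le> (2 * real N + 2) * D"
proof -
  define X Y T where "X = g [^] N" and "Y = h [^] N" and "T = (g \<otimes> h) [^] N"
  have X: "X \<in> carrier G" and Y: "Y \<in> carrier G" and T: "T \<in> carrier G"
    using g h by (auto simp: X_def Y_def T_def)
  have "X \<otimes> Y = (X \<otimes> Y \<otimes> inv T) \<otimes> T" using X Y T by (simp add: m_assoc)
  then show ?thesis
    using alternating_qm_cobound[OF qm X Y] alternating_qm_cobound[OF qm, of "X \<otimes> Y \<otimes> inv T" T]
      alternating_qm_power_defect_word[OF qm g h, of N] X Y T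
    by (simp add: X_def Y_def T_def abs_le_iff algebra_simps)
qed

lemma alternating_qm_growth_le:
  assumes qm: "alternating_qm \<phi> D" and g: "g \<in> carrier G" and h: "h \<in> carrier G"
    and growth: "\<And>N. real N * \<alpha> \<le> \<phi> (g [^] N) + \<phi> (h [^] N) - \<phi> ((g \<otimes> h) [^] N) + C"
  shows "\<alpha> \<le> 2 * D"
proof (rule ccontr)
  assume "\<not> \<alpha> \<le> 2 * D"
  then obtain N :: nat where N: "real N * (\<alpha> - 2 * D) > 2 * D + C"
    using reals_Archimedean3[of "\<alpha> - 2 * D"] by auto
  show False
    using growth[of N] alternating_qm_powers[OF qm g h, of N] N
    by (simp add: abs_le_iff algebra_simps)
qed

lemma alternating_qm_antisymmetrize:
  assumes alt: "\<forall>x \<in> carrier G. \<phi> (inv x) = - \<phi> x"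
    and defect: "\<forall>x \<in> carrier G. \<forall>y \<in> carrier G. \<bar>cobound1 G (\<lambda>x. \<phi> x + \<beta> x) x y\<bar> \<le> E"
  shows "alternating_qm (\<lambda>x. \<phi> x + (\<beta> x - \<beta> (inv x)) / 2) E"
  unfolding alternating_qm_def
proof (intro conjI ballI)
  fix x y assume x: "x \<in> carrier G" and y: "y \<in> carrier G"
  have "cobound1 G (\<lambda>x. \<phi> x + (\<beta> x - \<beta> (inv x)) / 2) x y =
      (cobound1 G (\<lambda>x. \<phi> x + \<beta> x) x y - cobound1 G (\<lambda>x. \<phi> x + \<beta> x) (inv y) (inv x)) / 2"
    using alt x y alt[rule_format, of "x \<otimes> y"] by (simp add: cobound1_def inv_mult_group field_simps)
  then show "\<bar>cobound1 G (\<lambda>x. \<phi> x + (\<beta> x - \<beta> (inv x)) / 2) x y\<bar> \<le> E"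
    using defect[rule_format, OF x y] defect[rule_format, OF inv_closed[OF y] inv_closed[OF x]]
    by (simp add: abs_le_iff)
qed (use alt in \<open>simp add: field_simps\<close>)

end

section \<open>The defect space of the integers\<close>

lemma defect_space_Z_bounded: "f \<in> defect_space_Z \<Longrightarrow> \<exists>C. \<forall>n. \<bar>f n\<bar> \<le> C"
  by (simp add: defect_space_Z_def)

lemma defect_space_Z_uminus: "f \<in> defect_space_Z \<Longrightarrow> f (- n) = - f n"
  by (simp add: defect_space_Z_def)

lemma defect_space_Z_zero: "f \<in> defect_space_Z \<Longrightarrow> f 0 = 0"
  using defect_space_Z_uminus[of f 0] by simp

lemma defect_space_Z_diff:
  assumes f: "f \<in> defect_space_Z" and g: "g \<in> defect_space_Z"
  shows "(\<lambda>n. f n - g n) \<in> defect_space_Z"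
proof -
  obtain C D where "\<forall>n. \<bar>f n\<bar> \<le> C" and "\<forall>n. \<bar>g n\<bar> \<le> D"
    using defect_space_Z_bounded[OF f] defect_space_Z_bounded[OF g] by blast
  then have "\<forall>n. \<bar>f n - g n\<bar> \<le> C + D" by (metis abs_triangle_ineq4 add_mono order_trans)
  then show ?thesis
    using defect_space_Z_uminus[OF f] defect_space_Z_uminus[OF g] by (auto simp: defect_space_Z_def)
qed

lemma abs_cobound_le_defect:
  assumes f: "f \<in> defect_space_Z"
  shows "\<bar>f m + f n - f (m + n)\<bar> \<le> defect f"
proof -
  obtain C where C: "\<forall>n. \<bar>f n\<bar> \<le> C" using defect_space_Z_bounded[OF f] by blast
  have "\<bar>f m + f n - f (m + n)\<bar> \<le> 3 * C" for m n
    using C[rule_format, of m] C[rule_format, of n] C[rule_format, of "m + n"] by arith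
  then have "bdd_above ((\<lambda>(m, n). \<bar>f m + f n - f (m + n)\<bar>) ` UNIV)"
    by (intro bdd_aboveI[of _ "3 * C"]) auto
  then show ?thesis
    unfolding defect_def using cSUP_upper[of "(m, n)" UNIV] by fastforce
qed

lemma defect_nonneg: "f \<in> defect_space_Z \<Longrightarrow> 0 \<le> defect f"
  using abs_cobound_le_defect[of f 0 0] by simp

lemma defect_le: "(\<And>m n. \<bar>f m + f n - f (m + n)\<bar> \<le> E) \<Longrightarrow> defect f \<le> E"
  unfolding defect_def by (rule cSUP_least) auto

text \<open>f(N k) deviates from N f(k) by at most N defect f, while f stays bounded.\<close>

lemma abs_le_defect:
  assumes f: "f \<in> defect_space_Z"
  shows "\<bar>f k\<bar> \<le> defect f"
proof (rule ccontr)
  assume "\<not> ?thesis"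
  then have pos: "\<bar>f k\<bar> - defect f > 0" by simp
  obtain C where C: "\<forall>n. \<bar>f n\<bar> \<le> C" using defect_space_Z_bounded[OF f] by blast
  have mult: "\<bar>real N * f k - f (int N * k)\<bar> \<le> real N * defect f" for N :: nat
  proof (induction N)
    case (Suc N)
    have "int (Suc N) * k = int N * k + k" by (simp add: algebra_simps)
    then show ?case
      using Suc abs_cobound_le_defect[OF f, of "int N * k" k] by (simp add: algebra_simps abs_le_iff)
  qed (simp add: defect_space_Z_zero[OF f])
  obtain N :: nat where N: "real N * (\<bar>f k\<bar> - defect f) > C"
    using reals_Archimedean3[OF pos] by blast
  have "real N * \<bar>f k\<bar> - \<bar>f (int N * k)\<bar> \<le> real N * defect f"
    using mult[of N] abs_triangle_ineq2[of "real N * f k" "f (int N * k)"] by (simp add: abs_mult)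
  then show False using N C[rule_format, of "int N * k"] by (simp add: algebra_simps)
qed

context group
begin

definition cyclic_qm :: "'a \<Rightarrow> (int \<Rightarrow> real) \<Rightarrow> 'a \<Rightarrow> real" where
  "cyclic_qm a f x = (if \<exists>k::int. x = a [^] k then f (THE k::int. x = a [^] k) else 0)"

lemma cyclic_qm_pow:
  assumes "a \<in> carrier G" and "ord a = 0"
  shows "cyclic_qm a f (a [^] (k::int)) = f k"
proof -
  have "a [^] k = a [^] j \<longleftrightarrow> j = k" for j :: int
    using int_pow_eq[OF assms(1), of k j] by (simp add: assms(2))
  then show ?thesis by (simp add: cyclic_qm_def)
qed

lemma cyclic_qm_non_pow: "\<nexists>k::int. x = a [^] k \<Longrightarrow> cyclic_qm a f x = 0"
  by (simp add: cyclic_qm_def)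

lemma cyclic_qm_linear:
  "cyclic_qm a (\<lambda>n. s * f n + t * g n) x = s * cyclic_qm a f x + t * cyclic_qm a g x"
  by (simp add: cyclic_qm_def)

lemma alternating_qm_cyclic_qm:
  assumes a: "a \<in> carrier G" "ord a = 0" and f: "f \<in> defect_space_Z"
  shows "alternating_qm (cyclic_qm a f) (defect f)"
proof -
  let ?\<phi> = "cyclic_qm a f"
  define pows where "pows = range (\<lambda>k::int. a [^] k)"
  have pow: "?\<phi> (a [^] k) = f k" for k :: int
    by (rule cyclic_qm_pow[OF a])
  have non_pow: "x \<notin> pows \<Longrightarrow> ?\<phi> x = 0" for x
    by (rule cyclic_qm_non_pow) (auto simp: pows_def)
  have bound: "\<bar>?\<phi> x\<bar> \<le> defect f" for x
    by (cases "x \<in> pows") (auto simp: pows_def pow non_pow abs_le_defect[OF f] defect_nonneg[OF f])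
  have mult_pows: "u \<otimes> v \<in> pows" if "u \<in> pows" "v \<in> pows" for u v
    using that a by (auto simp: pows_def int_pow_mult[symmetric])
  have inv_pows: "inv u \<in> pows" if "u \<in> pows" for u
    using that a by (auto simp: pows_def int_pow_neg[symmetric])
  have "?\<phi> (inv x) = - ?\<phi> x" if x: "x \<in> carrier G" for x
  proof (cases "x \<in> pows")
    case True
    then obtain k :: int where "x = a [^] k" by (auto simp: pows_def)
    then show ?thesis using a by (simp add: pow int_pow_neg[symmetric] defect_space_Z_uminus[OF f])
  next
    case False
    then have "inv x \<notin> pows" using inv_pows[of "inv x"] x by auto
    then show ?thesis using False by (simp add: non_pow)
  qed
  moreover have "\<bar>cobound1 G ?\<phi> x y\<bar> \<le> defect f" if x: "x \<in> carrier G" and y: "y \<in> carrier G" for x y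
  proof -
    have y_eq: "y = inv x \<otimes> (x \<otimes> y)" and x_eq: "x = (x \<otimes> y) \<otimes> inv y"
      using x y by (simp_all add: m_assoc inv_mult_cancel_left)
    consider "x \<in> pows" "y \<in> pows" | "x \<in> pows" "y \<notin> pows" | "x \<notin> pows" "y \<in> pows"
      | "x \<notin> pows" "y \<notin> pows" by blast
    then show ?thesis
    proof cases
      case 1
      then obtain i j :: int where "x = a [^] i" "y = a [^] j" by (auto simp: pows_def)
      then show ?thesis
        using abs_cobound_le_defect[OF f, of i j] a by (simp add: cobound1_def pow int_pow_mult[symmetric])
    next
      case 2
      then have "x \<otimes> y \<notin> pows" using y_eq mult_pows inv_pows by metis
      then show ?thesis using 2 bound[of x] by (simp add: cobound1_def non_pow)
    next
      case 3
      then have "x \<otimes> y \<notin> pows" using x_eq mult_pows inv_pows by metis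
      then show ?thesis using 3 bound[of y] by (simp add: cobound1_def non_pow)
    next
      case 4
      then show ?thesis using bound[of "x \<otimes> y"] by (simp add: cobound1_def non_pow)
    qed
  qed
  ultimately show ?thesis by (simp add: alternating_qm_def)
qed

end

section \<open>The Gromov norm\<close>

lemma bounded1_zero: "bounded1 G (\<lambda>_. 0)"
  unfolding bounded1_def by (intro exI[of _ 0]) simp

lemma bounded1_diff:
  assumes "bounded1 G b" and "bounded1 G b'"
  shows "bounded1 G (\<lambda>x. b x - b' x)"
proof -
  obtain K K' where "\<forall>g \<in> carrier G. \<bar>b g\<bar> \<le> K" and "\<forall>g \<in> carrier G. \<bar>b' g\<bar> \<le> K'"
    using assms by (auto simp: bounded1_def)
  then have "\<forall>g \<in> carrier G. \<bar>b g - b' g\<bar> \<le> K + K'"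
    by (meson abs_triangle_ineq4 add_mono order_trans)
  then show ?thesis unfolding bounded1_def by blast
qed

lemma bounded2_diff:
  assumes "bounded2 G c" and "bounded2 G c'"
  shows "bounded2 G (\<lambda>g h. c g h - c' g h)"
proof -
  obtain C C' where "\<forall>g \<in> carrier G. \<forall>h \<in> carrier G. \<bar>c g h\<bar> \<le> C"
    and "\<forall>g \<in> carrier G. \<forall>h \<in> carrier G. \<bar>c' g h\<bar> \<le> C'"
    using assms by (auto simp: bounded2_def)
  then have "\<forall>g \<in> carrier G. \<forall>h \<in> carrier G. \<bar>c g h - c' g h\<bar> \<le> C + C'"
    by (meson abs_triangle_ineq4 add_mono order_trans)
  then show ?thesis unfolding bounded2_def by blast
qed

context group
begin

lemma bcocycle2_cobound1: "bounded2 G (cobound1 G b) \<Longrightarrow> bcocycle2 G (cobound1 G b)"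
  by (simp add: bcocycle2_def cobound1_def m_assoc)

definition sup_norm_perturbed :: "('a \<Rightarrow> 'a \<Rightarrow> real) \<Rightarrow> ('a \<Rightarrow> real) \<Rightarrow> real" where
  "sup_norm_perturbed c b = (SUP (g, h) \<in> carrier G \<times> carrier G. \<bar>c g h + cobound1 G b g h\<bar>)"

lemma gromov_norm_eq_Inf: "gromov_norm G c = Inf {sup_norm_perturbed c b | b. bounded1 G b}"
  by (simp add: gromov_norm_def sup_norm_perturbed_def)

lemma abs_le_sup_norm_perturbed:
  assumes c: "bounded2 G c" and b: "bounded1 G b" and g: "g \<in> carrier G" and h: "h \<in> carrier G"
  shows "\<bar>c g h + cobound1 G b g h\<bar> \<le> sup_norm_perturbed c b"
proof -
  obtain C K where C: "\<forall>g \<in> carrier G. \<forall>h \<in> carrier G. \<bar>c g h\<bar> \<le> C"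
    and K: "\<forall>g \<in> carrier G. \<bar>b g\<bar> \<le> K"
    using c b by (auto simp: bounded2_def bounded1_def)
  have "\<bar>c g h + cobound1 G b g h\<bar> \<le> C + 3 * K" if "g \<in> carrier G" "h \<in> carrier G" for g h
  proof -
    have "\<bar>c g h\<bar> \<le> C" "\<bar>b g\<bar> \<le> K" "\<bar>b h\<bar> \<le> K" "\<bar>b (g \<otimes> h)\<bar> \<le> K"
      using C K that by auto
    then show ?thesis unfolding cobound1_def by linarith
  qed
  then have "bdd_above ((\<lambda>(g, h). \<bar>c g h + cobound1 G b g h\<bar>) ` (carrier G \<times> carrier G))"
    by (intro bdd_aboveI[of _ "C + 3 * K"]) auto
  then have "(\<lambda>(g, h). \<bar>c g h + cobound1 G b g h\<bar>) (g, h) \<le> sup_norm_perturbed c b"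
    unfolding sup_norm_perturbed_def by (rule cSUP_upper[rotated]) (use g h in simp)
  then show ?thesis by simp
qed

lemma sup_norm_perturbed_le:
  "\<forall>g \<in> carrier G. \<forall>h \<in> carrier G. \<bar>c g h + cobound1 G b g h\<bar> \<le> E \<Longrightarrow> sup_norm_perturbed c b \<le> E"
  unfolding sup_norm_perturbed_def by (rule cSUP_least) auto

lemma gromov_norm_le_sup_norm_perturbed:
  assumes "bounded2 G c" and "bounded1 G b"
  shows "gromov_norm G c \<le> sup_norm_perturbed c b"
proof -
  have "0 \<le> sup_norm_perturbed c b'" if "bounded1 G b'" for b'
    using abs_le_sup_norm_perturbed[OF assms(1) that one_closed one_closed] by linarith
  then have "bdd_below {sup_norm_perturbed c b | b. bounded1 G b}"
    by (auto intro: bdd_belowI[of _ 0])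
  then show ?thesis
    unfolding gromov_norm_eq_Inf using assms(2) by (auto intro: cInf_lower)
qed

lemma gromov_norm_le:
  assumes "bounded2 G c" and "bounded1 G b"
    and "\<forall>g \<in> carrier G. \<forall>h \<in> carrier G. \<bar>c g h + cobound1 G b g h\<bar> \<le> E"
  shows "gromov_norm G c \<le> E"
  using gromov_norm_le_sup_norm_perturbed[OF assms(1,2)] sup_norm_perturbed_le[OF assms(3)] by linarith

lemma le_gromov_norm:
  assumes "\<And>b. bounded1 G b \<Longrightarrow> L \<le> sup_norm_perturbed c b"
  shows "L \<le> gromov_norm G c"
proof -
  show ?thesis
    unfolding gromov_norm_eq_Inf by (rule cInf_greatest) (use assms bounded1_zero in auto)
qed

lemma gromov_norm_less:
  assumes "gromov_norm G c < z"
  obtains b where "bounded1 G b" and "sup_norm_perturbed c b < z"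
proof -
  have "{sup_norm_perturbed c b | b. bounded1 G b} \<noteq> {}"
    using bounded1_zero by blast
  from cInf_lessD[OF this assms[unfolded gromov_norm_eq_Inf]] show ?thesis
    using that by blast
qed

lemma gromov_norm_diff_less:
  assumes c1: "bounded2 G c1" and c2: "bounded2 G c2" and s: "bounded2 G s"
    and z1: "gromov_norm G (\<lambda>g h. c1 g h - s g h) < z1"
    and z2: "gromov_norm G (\<lambda>g h. c2 g h - s g h) < z2"
  shows "gromov_norm G (\<lambda>g h. c1 g h - c2 g h) < z1 + z2"
proof -
  obtain b1 where b1: "bounded1 G b1" "sup_norm_perturbed (\<lambda>g h. c1 g h - s g h) b1 < z1"
    using gromov_norm_less[OF z1] .
  obtain b2 where b2: "bounded1 G b2" "sup_norm_perturbed (\<lambda>g h. c2 g h - s g h) b2 < z2"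
    using gromov_norm_less[OF z2] .
  have "\<bar>c1 g h - c2 g h + cobound1 G (\<lambda>x. b1 x - b2 x) g h\<bar> \<le>
      sup_norm_perturbed (\<lambda>g h. c1 g h - s g h) b1 + sup_norm_perturbed (\<lambda>g h. c2 g h - s g h) b2"
    if "g \<in> carrier G" "h \<in> carrier G" for g h
    using abs_le_sup_norm_perturbed[OF bounded2_diff[OF c1 s] b1(1) that]
      abs_le_sup_norm_perturbed[OF bounded2_diff[OF c2 s] b2(1) that]
    by (simp add: cobound1_def abs_le_iff)
  then have "gromov_norm G (\<lambda>g h. c1 g h - c2 g h) \<le>
      sup_norm_perturbed (\<lambda>g h. c1 g h - s g h) b1 + sup_norm_perturbed (\<lambda>g h. c2 g h - s g h) b2"
    using gromov_norm_le[OF bounded2_diff[OF c1 c2] bounded1_diff[OF b1(1) b2(1)]] by blast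
  with b1(2) b2(2) show ?thesis by linarith
qed

lemma no_countable_dense_if_separated:
  assumes T: "uncountable T" and \<delta>: "0 < \<delta>"
    and cocycle: "\<forall>X \<in> T. bcocycle2 G (c X)"
    and separated: "\<forall>X \<in> T. \<forall>Y \<in> T. X \<noteq> Y \<longrightarrow> \<delta> \<le> gromov_norm G (\<lambda>g h. c X g h - c Y g h)"
  shows "\<not> (\<exists>S. countable S \<and> (\<forall>s \<in> S. bcocycle2 G s) \<and>
              (\<forall>c. bcocycle2 G c \<longrightarrow> (\<forall>\<epsilon>>0. \<exists>s \<in> S. gromov_norm G (\<lambda>g h. c g h - s g h) < \<epsilon>)))"
proof
  assume "\<exists>S. countable S \<and> (\<forall>s \<in> S. bcocycle2 G s) \<and>
              (\<forall>c. bcocycle2 G c \<longrightarrow> (\<forall>\<epsilon>>0. \<exists>s \<in> S. gromov_norm G (\<lambda>g h. c g h - s g h) < \<epsilon>))"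
  then obtain S where S: "countable S" "\<forall>s \<in> S. bcocycle2 G s"
    and dense: "\<forall>c. bcocycle2 G c \<longrightarrow> (\<forall>\<epsilon>>0. \<exists>s \<in> S. gromov_norm G (\<lambda>g h. c g h - s g h) < \<epsilon>)"
    by blast
  have "\<forall>X \<in> T. \<exists>s. s \<in> S \<and> gromov_norm G (\<lambda>g h. c X g h - s g h) < \<delta> / 2"
  proof
    fix X assume "X \<in> T"
    then have "\<forall>\<epsilon>>0. \<exists>s \<in> S. gromov_norm G (\<lambda>g h. c X g h - s g h) < \<epsilon>"
      using dense cocycle by blast
    then show "\<exists>s. s \<in> S \<and> gromov_norm G (\<lambda>g h. c X g h - s g h) < \<delta> / 2"
      using half_gt_zero[OF \<delta>] by blast
  qed
  from bchoice[OF this] obtain approx where approx: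
    "\<forall>X \<in> T. approx X \<in> S \<and> gromov_norm G (\<lambda>g h. c X g h - approx X g h) < \<delta> / 2" ..
  then have "approx ` T \<subseteq> S" by blast
  then have "\<not> inj_on approx T"
    using countable_image_inj_on countable_subset[OF _ S(1)] T by blast
  then obtain X Y where XY: "X \<in> T" "Y \<in> T" "X \<noteq> Y" "approx X = approx Y"
    by (auto simp: inj_on_def)
  have "bounded2 G (c X)" "bounded2 G (c Y)" "bounded2 G (approx X)"
    using cocycle S(2) approx XY(1,2) by (simp_all add: bcocycle2_def)
  moreover have "gromov_norm G (\<lambda>g h. c X g h - approx X g h) < \<delta> / 2"
    using approx XY(1) by blast
  moreover have "gromov_norm G (\<lambda>g h. c Y g h - approx X g h) < \<delta> / 2"
    using approx XY(2) unfolding XY(4) by blast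
  ultimately have "gromov_norm G (\<lambda>g h. c X g h - c Y g h) < \<delta> / 2 + \<delta> / 2"
    by (rule gromov_norm_diff_less)
  moreover have "\<delta> \<le> gromov_norm G (\<lambda>g h. c X g h - c Y g h)"
    using separated XY(1-3) by blast
  ultimately show False by simp
qed

end

section \<open>Reduced words in a free product\<close>

fun alternating :: "(bool \<times> 'g) list \<Rightarrow> bool" where
  "alternating (x # y # r) = (fst x \<noteq> fst y \<and> alternating (y # r))"
| "alternating _ = True"

lemma alternating_iff_nth:
  "alternating ws \<longleftrightarrow> (\<forall>i. Suc i < length ws \<longrightarrow> fst (ws ! i) \<noteq> fst (ws ! Suc i))"
proof (induction ws rule: alternating.induct)
  case (1 x y r)
  have "(\<forall>i. Suc i < length (x # y # r) \<longrightarrow> fst ((x # y # r) ! i) \<noteq> fst ((x # y # r) ! Suc i)) \<longleftrightarrow>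
        fst x \<noteq> fst y \<and> (\<forall>i. Suc i < length (y # r) \<longrightarrow> fst ((y # r) ! i) \<noteq> fst ((y # r) ! Suc i))"
    by (auto simp: nth_Cons split: nat.splits)
  with 1 show ?case by simp
qed auto

lemma alternating_Cons:
  "alternating (x # xs) \<longleftrightarrow> alternating xs \<and> (xs \<noteq> [] \<longrightarrow> fst x \<noteq> fst (hd xs))"
  by (cases xs) auto

lemma alternating_append:
  "alternating (xs @ ys) \<longleftrightarrow>
     alternating xs \<and> alternating ys \<and> (xs \<noteq> [] \<longrightarrow> ys \<noteq> [] \<longrightarrow> fst (last xs) \<noteq> fst (hd ys))"
  by (induction xs) (auto simp: alternating_Cons)

lemma alternating_rev: "alternating (rev ws) = alternating ws"
  by (induction ws) (auto simp: alternating_append alternating_Cons last_rev hd_rev)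

lemma alternating_map_snd: "alternating (map (\<lambda>(t, x). (t, k x)) ws) = alternating ws"
  by (induction ws) (auto simp: alternating_Cons hd_map split: prod.splits)

lemma word_eval_Nil [simp]: "word_eval G [] = \<one>\<^bsub>G\<^esub>"
  by (simp add: word_eval_def)

lemma word_eval_Cons [simp]: "word_eval G ((t, x) # ws) = x \<otimes>\<^bsub>G\<^esub> word_eval G ws"
  by (simp add: word_eval_def)

locale free_product =
  fixes G (structure) and A B :: "'g set"
  assumes free_product: "is_free_product G A B"

sublocale free_product \<subseteq> group G
  using free_product by (simp add: is_free_product_def)

context free_product
begin

lemma subgroup_A: "subgroup A G"
  using free_product by (simp add: is_free_product_def)

lemma subgroup_B: "subgroup B G"
  using free_product by (simp add: is_free_product_def)

definition syllable :: "bool \<Rightarrow> 'g \<Rightarrow> bool" where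
  "syllable t x \<longleftrightarrow> x \<in> (if t then A else B) \<and> x \<noteq> \<one>"

definition reduced :: "(bool \<times> 'g) list \<Rightarrow> bool" where
  "reduced ws \<longleftrightarrow> (\<forall>(t, x) \<in> set ws. syllable t x) \<and> alternating ws"

lemma reduced_word_iff_reduced: "reduced_word G A B ws \<longleftrightarrow> reduced ws"
  unfolding reduced_word_def reduced_def syllable_def alternating_iff_nth by simp

lemma reduced_Nil [simp]: "reduced []"
  by (simp add: reduced_def)

lemma reduced_Cons:
  "reduced ((t, x) # ws) \<longleftrightarrow> syllable t x \<and> reduced ws \<and> (ws \<noteq> [] \<longrightarrow> t \<noteq> fst (hd ws))"
  unfolding reduced_def by (auto simp: alternating_Cons)

lemma reduced_append:
  "reduced (xs @ ys) \<longleftrightarrow>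
     reduced xs \<and> reduced ys \<and> (xs \<noteq> [] \<longrightarrow> ys \<noteq> [] \<longrightarrow> fst (last xs) \<noteq> fst (hd ys))"
  unfolding reduced_def by (auto simp: alternating_append)

lemma syllable_carrier: "syllable t x \<Longrightarrow> x \<in> carrier G"
  using subgroup.subset[OF subgroup_A] subgroup.subset[OF subgroup_B]
  by (auto simp: syllable_def split: if_splits)

lemma syllable_mult: "syllable t x \<Longrightarrow> syllable t y \<Longrightarrow> x \<otimes> y \<noteq> \<one> \<Longrightarrow> syllable t (x \<otimes> y)"
  using subgroup.m_closed[OF subgroup_A] subgroup.m_closed[OF subgroup_B]
  by (cases t) (auto simp: syllable_def)

lemma syllable_inv: "syllable t x \<Longrightarrow> syllable t (inv x)"
  using subgroup.m_inv_closed[OF subgroup_A] subgroup.m_inv_closed[OF subgroup_B]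
    subgroup.subset[OF subgroup_A] subgroup.subset[OF subgroup_B]
  by (cases t) (auto simp: syllable_def)

lemma reduced_letters_closed: "reduced ws \<Longrightarrow> snd ` set ws \<subseteq> carrier G"
  unfolding reduced_def using syllable_carrier by auto

lemma word_eval_closed: "snd ` set ws \<subseteq> carrier G \<Longrightarrow> word_eval G ws \<in> carrier G"
  by (induction ws) auto

lemma word_eval_append:
  "snd ` set xs \<subseteq> carrier G \<Longrightarrow> snd ` set ys \<subseteq> carrier G \<Longrightarrow>
     word_eval G (xs @ ys) = word_eval G xs \<otimes> word_eval G ys"
  by (induction xs) (auto simp: m_assoc word_eval_closed)

definition normal_form :: "'g \<Rightarrow> (bool \<times> 'g) list" where
  "normal_form g = the_inv_into {ws. reduced ws} (word_eval G) g"

lemma bij_betw_word_eval: "bij_betw (word_eval G) {ws. reduced ws} (carrier G)"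
  using free_product by (simp add: is_free_product_def reduced_word_iff_reduced)

lemma normal_form_word_eval: "reduced ws \<Longrightarrow> normal_form (word_eval G ws) = ws"
  unfolding normal_form_def
  by (rule the_inv_into_f_f) (use bij_betw_word_eval in \<open>auto simp: bij_betw_def\<close>)

lemma reduced_normal_form: "g \<in> carrier G \<Longrightarrow> reduced (normal_form g)"
  unfolding normal_form_def using bij_betw_the_inv_into[OF bij_betw_word_eval]
  by (auto simp: bij_betw_def)

lemma word_eval_normal_form: "g \<in> carrier G \<Longrightarrow> word_eval G (normal_form g) = g"
  unfolding normal_form_def
  by (rule f_the_inv_into_f) (use bij_betw_word_eval in \<open>auto simp: bij_betw_def\<close>)

definition inverse_word :: "(bool \<times> 'g) list \<Rightarrow> (bool \<times> 'g) list" where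
  "inverse_word ws = rev (map (\<lambda>(t, x). (t, inv x)) ws)"

lemma reduced_inverse_word: "reduced ws \<Longrightarrow> reduced (inverse_word ws)"
  unfolding reduced_def inverse_word_def using syllable_inv
  by (auto simp: alternating_rev alternating_map_snd)

lemma inverse_word_letters_closed:
  "snd ` set ws \<subseteq> carrier G \<Longrightarrow> snd ` set (inverse_word ws) \<subseteq> carrier G"
  by (force simp: inverse_word_def)

lemma word_eval_inverse_word:
  "snd ` set ws \<subseteq> carrier G \<Longrightarrow> word_eval G (inverse_word ws) = inv (word_eval G ws)"
proof (induction ws)
  case (Cons p ws)
  obtain t x where p: "p = (t, x)" by (cases p)
  have x: "x \<in> carrier G" and ws: "snd ` set ws \<subseteq> carrier G" using Cons.prems p by auto
  have "word_eval G (inverse_word (p # ws)) = word_eval G (inverse_word ws) \<otimes> inv x"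
    using word_eval_append[OF inverse_word_letters_closed[OF ws], of "[(t, inv x)]"] x
    by (simp add: p inverse_word_def)
  also have "\<dots> = inv (word_eval G (p # ws))"
    using Cons.IH[OF ws] x word_eval_closed[OF ws] by (simp add: p inv_mult_group)
  finally show ?case .
qed (simp add: inverse_word_def)

lemma word_eval_power:
  "snd ` set ws \<subseteq> carrier G \<Longrightarrow> word_eval G (concat (replicate N ws)) = word_eval G ws [^] N"
proof (induction N)
  case (Suc N)
  have "snd ` set (concat (replicate N ws)) \<subseteq> carrier G" using Suc.prems by force
  with Suc word_eval_closed[OF Suc.prems] show ?case
    by (simp add: word_eval_append) (metis nat_pow_Suc nat_pow_Suc2)
qed simp

lemma reduced_power:
  assumes "reduced ws" and "ws \<noteq> []" and "fst (last ws) \<noteq> fst (hd ws)"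
  shows "reduced (concat (replicate N ws))"
proof (induction N)
  case (Suc N)
  have "N > 0 \<Longrightarrow> hd (concat (replicate N ws)) = hd ws"
    using assms(2) by (cases N) auto
  with Suc assms show ?case by (auto simp: reduced_append)
qed simp

end

section \<open>Extending a quasimorphism from a free factor\<close>

context free_product
begin

definition syllable_sum :: "('g \<Rightarrow> real) \<Rightarrow> (bool \<times> 'g) list \<Rightarrow> real" where
  "syllable_sum \<phi> ws = sum_list (map (\<lambda>(t, x). if t then \<phi> x else 0) ws)"

definition extend_qm :: "('g \<Rightarrow> real) \<Rightarrow> 'g \<Rightarrow> real" where
  "extend_qm \<phi> g = syllable_sum \<phi> (normal_form g)"

lemma syllable_sum_Nil [simp]: "syllable_sum \<phi> [] = 0"
  by (simp add: syllable_sum_def)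

lemma syllable_sum_Cons [simp]:
  "syllable_sum \<phi> ((t, x) # ws) = (if t then \<phi> x else 0) + syllable_sum \<phi> ws"
  by (simp add: syllable_sum_def)

lemma syllable_sum_append [simp]: "syllable_sum \<phi> (xs @ ys) = syllable_sum \<phi> xs + syllable_sum \<phi> ys"
  by (simp add: syllable_sum_def)

lemma extend_qm_word_eval: "reduced ws \<Longrightarrow> extend_qm \<phi> (word_eval G ws) = syllable_sum \<phi> ws"
  by (simp add: extend_qm_def normal_form_word_eval)

lemma extend_qm_one [simp]: "extend_qm \<phi> \<one> = 0"
  using extend_qm_word_eval[OF reduced_Nil] by simp

lemma extend_qm_linear:
  "extend_qm (\<lambda>x. s * \<phi> x + t * \<psi> x) g = s * extend_qm \<phi> g + t * extend_qm \<psi> g"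
proof -
  have "syllable_sum (\<lambda>x. s * \<phi> x + t * \<psi> x) ws = s * syllable_sum \<phi> ws + t * syllable_sum \<psi> ws"
    for ws by (induction ws) (auto simp: algebra_simps)
  then show ?thesis by (simp add: extend_qm_def)
qed

lemma extend_qm_power:
  assumes "reduced ws" and "ws \<noteq> []" and "fst (last ws) \<noteq> fst (hd ws)"
  shows "extend_qm \<phi> (word_eval G ws [^] N) = real N * syllable_sum \<phi> ws"
proof -
  have "syllable_sum \<phi> (concat (replicate N ws)) = real N * syllable_sum \<phi> ws"
    by (induction N) (auto simp: algebra_simps)
  then show ?thesis
    using extend_qm_word_eval[OF reduced_power[OF assms]]
      word_eval_power[OF reduced_letters_closed[OF assms(1)]] by simp
qed

lemma extend_qm_inv:
  assumes alt: "\<forall>x \<in> A. \<phi> (inv x) = - \<phi> x" and g: "g \<in> carrier G"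
  shows "extend_qm \<phi> (inv g) = - extend_qm \<phi> g"
proof -
  have "reduced ws \<Longrightarrow> syllable_sum \<phi> (inverse_word ws) = - syllable_sum \<phi> ws" for ws
  proof (induction ws)
    case (Cons p ws)
    then show ?case
      using alt by (cases p) (auto simp: inverse_word_def reduced_Cons syllable_def)
  qed (simp add: inverse_word_def)
  moreover have "inv g = word_eval G (inverse_word (normal_form g))"
    using word_eval_inverse_word[OF reduced_letters_closed[OF reduced_normal_form[OF g]]]
    by (simp add: word_eval_normal_form[OF g])
  ultimately show ?thesis
    using extend_qm_word_eval[OF reduced_inverse_word[OF reduced_normal_form[OF g]]]
      reduced_normal_form[OF g] by (simp add: extend_qm_def)
qed

lemma extend_qm_cobound_le:
  assumes alt: "\<forall>x \<in> A. \<phi> (inv x) = - \<phi> x"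
    and defect: "\<forall>x \<in> A. \<forall>y \<in> A. \<bar>cobound1 G \<phi> x y\<bar> \<le> D"
    and g: "g \<in> carrier G" and h: "h \<in> carrier G"
  shows "\<bar>cobound1 G (extend_qm \<phi>) g h\<bar> \<le> D"
proof -
  let ?F = "extend_qm \<phi>"
  have "\<phi> \<one> = 0"
    using alt subgroup.one_closed[OF subgroup_A] by force
  then have D: "0 \<le> D"
    using defect subgroup.one_closed[OF subgroup_A] by (force simp: cobound1_def)
  txt \<open>Multiplying g by the first syllable x of h either appends x to the normal form of g,
    merges it into the last syllable of g (costing at most D), or cancels that syllable, in which
    case the induction hypothesis applies to the shortened g.\<close>
  have bound: "\<bar>cobound1 G ?F g (word_eval G hs)\<bar> \<le> D" if "g \<in> carrier G" "reduced hs" for g hs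
    using that
  proof (induction hs arbitrary: g)
    case (Cons p hs)
    obtain t x where p: "p = (t, x)" by (cases p)
    have x: "syllable t x" and hs: "reduced hs" and th: "hs \<noteq> [] \<longrightarrow> t \<noteq> fst (hd hs)"
      using Cons.prems(2) by (auto simp: p reduced_Cons)
    define h where "h = word_eval G hs"
    have xc: "x \<in> carrier G" and hc: "h \<in> carrier G"
      using syllable_carrier[OF x] word_eval_closed[OF reduced_letters_closed[OF hs]] by (auto simp: h_def)
    have Fxh: "?F (x \<otimes> h) = (if t then \<phi> x else 0) + ?F h"
      using extend_qm_word_eval[OF Cons.prems(2)] extend_qm_word_eval[OF hs] by (simp add: p h_def)
    define gs where "gs = normal_form g"
    have gs: "reduced gs" "word_eval G gs = g" "?F g = syllable_sum \<phi> gs"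
      using reduced_normal_form word_eval_normal_form Cons.prems(1) by (auto simp: gs_def extend_qm_def)
    show ?case
    proof (cases "gs \<noteq> [] \<and> fst (last gs) = t")
      case True
      obtain us y where gsu: "gs = us @ [(t, y)]"
      proof
        show "gs = butlast gs @ [(t, snd (last gs))]"
          using True append_butlast_last_id[of gs] by (cases "last gs") simp
      qed
      have us: "reduced us" and y: "syllable t y" and tus: "us \<noteq> [] \<longrightarrow> fst (last us) \<noteq> t"
        using gs(1) by (auto simp: gsu reduced_append reduced_Cons)
      define u where "u = word_eval G us"
      have yc: "y \<in> carrier G" and uc: "u \<in> carrier G"
        using syllable_carrier[OF y] word_eval_closed[OF reduced_letters_closed[OF us]] by (auto simp: u_def)
      have gu: "g = u \<otimes> y"
        using gs(2) reduced_letters_closed[OF us] yc by (simp add: gsu word_eval_append u_def)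
      have Fg: "?F g = ?F u + (if t then \<phi> y else 0)"
        using gs(3) extend_qm_word_eval[OF us] by (simp add: gsu u_def)
      show ?thesis
      proof (cases "y \<otimes> x = \<one>")
        case True
        then have "x = inv y" using inv_equality[OF True xc yc] inv_inv[OF xc] by simp
        then have "(if t then \<phi> x else 0) = - (if t then \<phi> y else 0)"
          using alt y by (auto simp: syllable_def)
        moreover have "g \<otimes> (x \<otimes> h) = u \<otimes> h"
          using True uc yc xc hc by (simp add: gu m_assoc[symmetric]) (simp add: m_assoc)
        ultimately show ?thesis
          using Cons.IH[OF uc hs] Fg Fxh by (simp add: cobound1_def p h_def)
      next
        case False
        have red: "reduced (us @ (t, y \<otimes> x) # hs)"
          using us syllable_mult[OF y x False] hs th tus by (auto simp: reduced_append reduced_Cons)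
        have "word_eval G (us @ (t, y \<otimes> x) # hs) = g \<otimes> (x \<otimes> h)"
          using reduced_letters_closed[OF us] reduced_letters_closed[OF hs] xc yc uc hc
          by (simp add: word_eval_append gu m_assoc h_def[symmetric] u_def[symmetric])
        then have "?F (g \<otimes> (x \<otimes> h)) = ?F u + (if t then \<phi> (y \<otimes> x) else 0) + ?F h"
          using extend_qm_word_eval[OF red] extend_qm_word_eval[OF us] extend_qm_word_eval[OF hs]
          by (simp add: h_def u_def)
        moreover have "t \<Longrightarrow> \<bar>cobound1 G \<phi> y x\<bar> \<le> D"
          using defect y x by (auto simp: syllable_def)
        ultimately show ?thesis using Fg Fxh D by (cases t) (auto simp: cobound1_def p h_def)
      qed
    next
      case False
      then have red: "reduced (gs @ (t, x) # hs)"
        using gs(1) x hs th by (auto simp: reduced_append reduced_Cons)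
      have "word_eval G (gs @ (t, x) # hs) = g \<otimes> (x \<otimes> h)"
        using reduced_letters_closed[OF gs(1)] reduced_letters_closed[OF hs] xc
        by (simp add: word_eval_append gs(2) h_def)
      then have "?F (g \<otimes> (x \<otimes> h)) = ?F g + (if t then \<phi> x else 0) + ?F h"
        using extend_qm_word_eval[OF red] extend_qm_word_eval[OF hs] gs(3) by (simp add: h_def)
      then show ?thesis using Fxh D by (simp add: cobound1_def p h_def)
    qed
  qed (simp add: cobound1_def D)
  show ?thesis
    using bound[OF g reduced_normal_form[OF h]] by (simp add: word_eval_normal_form[OF h])
qed

end

section \<open>The isometric embedding\<close>

locale free_product_infinite_order = free_product +
  fixes a
  assumes a_in_A: "a \<in> A" and ord_a: "ord a = 0"
begin

abbreviation induced_qm where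
  "induced_qm f \<equiv> extend_qm (cyclic_qm a f)"

lemma a_carrier [simp]: "a \<in> carrier G"
  using a_in_A subgroup.subset[OF subgroup_A] by blast

lemma alternating_qm_induced_qm:
  assumes f: "f \<in> defect_space_Z"
  shows "alternating_qm (induced_qm f) (defect f)"
proof -
  have A: "A \<subseteq> carrier G" by (rule subgroup.subset[OF subgroup_A])
  have qm: "alternating_qm (cyclic_qm a f) (defect f)"
    by (rule alternating_qm_cyclic_qm[OF a_carrier ord_a f])
  then have alt: "\<forall>x \<in> A. cyclic_qm a f (inv x) = - cyclic_qm a f x"
    using A by (auto simp: alternating_qm_def)
  have "\<forall>x \<in> A. \<forall>y \<in> A. \<bar>cobound1 G (cyclic_qm a f) x y\<bar> \<le> defect f"
    using qm A by (auto simp: alternating_qm_def)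
  then show ?thesis
    using extend_qm_inv[OF alt] extend_qm_cobound_le[OF alt] by (simp add: alternating_qm_def)
qed

lemma induced_qm_linear:
  "induced_qm (\<lambda>n. s * f n + t * f' n) x = s * induced_qm f x + t * induced_qm f' x"
proof -
  have "cyclic_qm a (\<lambda>n. s * f n + t * f' n) = (\<lambda>x. s * cyclic_qm a f x + t * cyclic_qm a f' x)"
    by (rule ext) (rule cyclic_qm_linear)
  then show ?thesis by (simp add: extend_qm_linear)
qed

lemma syllable_a_pow: "k \<noteq> 0 \<Longrightarrow> syllable True (a [^] (k::int))"
  using subgroup_int_pow_closed[OF subgroup_A a_in_A, of k] int_pow_eq_id[OF a_carrier, of k]
  by (simp add: syllable_def ord_a)

lemma induced_qm_test_elements:
  assumes b: "b \<in> B" "b \<noteq> \<one>" and mn: "m \<noteq> 0" "n \<noteq> 0" "m + n \<noteq> 0"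
  obtains g h c w where "g \<in> carrier G" "h \<in> carrier G" "c \<in> carrier G" "w \<in> carrier G"
    and "g \<otimes> h = c \<otimes> w \<otimes> inv c"
    and "\<And>f N. induced_qm f (g [^] N) = 2 * real N * f m"
    and "\<And>f N. induced_qm f (h [^] N) = 2 * real N * f n"
    and "\<And>f N. induced_qm f (w [^] N) = 2 * real N * f (m + n)"
proof -
  define am an amn where "am = a [^] m" and "an = a [^] n" and "amn = a [^] (m + n)"
  have am: "am \<in> carrier G" and an: "an \<in> carrier G" and amn: "amn \<in> carrier G"
    by (simp_all add: am_def an_def amn_def)
  have amn_eq: "amn = am \<otimes> an" "amn = an \<otimes> am"
    by (simp_all add: amn_def am_def an_def int_pow_mult[symmetric] add.commute)
  have bc: "b \<in> carrier G" using b(1) subgroup.subset[OF subgroup_B] by blast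
  have sb: "syllable False b" "syllable False (inv b)"
    using b syllable_inv[of False b] by (simp_all add: syllable_def)
  define us vs ws where "us = [(True, am), (False, b)]" and "vs = [(False, inv b), (True, an)]"
    and "ws = [(False, b), (True, amn), (False, inv b), (True, amn)]"
  have red: "reduced us" "reduced vs" "reduced ws"
    using syllable_a_pow mn sb by (simp_all add: us_def vs_def ws_def am_def an_def amn_def reduced_Cons)
  define u v w where "u = word_eval G us" and "v = word_eval G vs" and "w = word_eval G ws"
  have u: "u = am \<otimes> b" and v: "v = inv b \<otimes> an" and w: "w = b \<otimes> (amn \<otimes> (inv b \<otimes> amn))"
    using am an amn bc by (simp_all add: u_def v_def w_def us_def vs_def ws_def)
  have uc: "u \<in> carrier G" and vc: "v \<in> carrier G" and wc: "w \<in> carrier G"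
    using am an amn bc by (simp_all add: u v w)
  have power: "induced_qm f (word_eval G zs [^] N) = real N * syllable_sum (cyclic_qm a f) zs"
    if "zs \<in> {us, vs, ws}" for f N zs
    using that red by (auto intro!: extend_qm_power simp: us_def vs_def ws_def)
  have pow_a: "cyclic_qm a f (a [^] k) = f k" for f k
    by (rule cyclic_qm_pow[OF a_carrier ord_a])
  show ?thesis
  proof
    have "u [^] (2::nat) \<otimes> v [^] (2::nat) = am \<otimes> (b \<otimes> ((am \<otimes> an) \<otimes> (inv b \<otimes> an)))"
      using am an bc by (simp add: u v numeral_2_eq_2 m_assoc mult_inv_cancel_left)
    also have "\<dots> = am \<otimes> (b \<otimes> (amn \<otimes> (inv b \<otimes> ((an \<otimes> am) \<otimes> inv am))))"
      using am an bc by (simp add: m_assoc amn_eq(1))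
    also have "\<dots> = am \<otimes> w \<otimes> inv am"
      using am an amn bc by (simp add: w m_assoc flip: amn_eq(2))
    finally show "u [^] (2::nat) \<otimes> v [^] (2::nat) = am \<otimes> w \<otimes> inv am" .
    show "induced_qm f ((u [^] (2::nat)) [^] N) = 2 * real N * f m" for f N
      using power[of us f "2 * N"] uc by (simp add: nat_pow_pow u_def us_def am_def pow_a)
    show "induced_qm f ((v [^] (2::nat)) [^] N) = 2 * real N * f n" for f N
      using power[of vs f "2 * N"] vc by (simp add: nat_pow_pow v_def vs_def an_def pow_a)
    show "induced_qm f (w [^] N) = 2 * real N * f (m + n)" for f N
      using power[of ws f N] by (simp add: w_def ws_def amn_def pow_a)
  qed (use uc vc am wc in simp_all)
qed

lemma defect_triple_le_of_perturbation:
  assumes f: "f \<in> defect_space_Z" and \<beta>: "bounded1 G \<beta>"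
    and E: "\<forall>x \<in> carrier G. \<forall>y \<in> carrier G. \<bar>cobound1 G (\<lambda>x. induced_qm f x + \<beta> x) x y\<bar> \<le> E"
    and b: "b \<in> B" "b \<noteq> \<one>" and mn: "m \<noteq> 0" "n \<noteq> 0" "m + n \<noteq> 0"
  shows "f m + f n - f (m + n) \<le> E"
proof -
  have F: "alternating_qm (induced_qm f) (defect f)"
    by (rule alternating_qm_induced_qm[OF f])
  obtain K where K: "\<forall>x \<in> carrier G. \<bar>\<beta> x\<bar> \<le> K"
    using \<beta> by (auto simp: bounded1_def)
  define \<psi> where "\<psi> x = induced_qm f x + (\<beta> x - \<beta> (inv x)) / 2" for x
  have \<psi>: "alternating_qm \<psi> E"
    unfolding \<psi>_def
    by (rule alternating_qm_antisymmetrize[OF _ E]) (use F in \<open>simp add: alternating_qm_def\<close>)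
  have close: "\<bar>\<psi> x - induced_qm f x\<bar> \<le> K" if "x \<in> carrier G" for x
  proof -
    have "\<bar>\<beta> x\<bar> \<le> K" "\<bar>\<beta> (inv x)\<bar> \<le> K" using K that by auto
    then show ?thesis by (simp add: \<psi>_def abs_le_iff)
  qed
  obtain g h c w where gh: "g \<in> carrier G" "h \<in> carrier G" "c \<in> carrier G" "w \<in> carrier G"
    and conj: "g \<otimes> h = c \<otimes> w \<otimes> inv c"
    and Fg: "\<And>N. induced_qm f (g [^] N) = 2 * real N * f m"
    and Fh: "\<And>N. induced_qm f (h [^] N) = 2 * real N * f n"
    and Fw: "\<And>N. induced_qm f (w [^] N) = 2 * real N * f (m + n)"
    using induced_qm_test_elements[OF b mn] by metis
  have "real N * (2 * (f m + f n - f (m + n))) \<le>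
      \<psi> (g [^] N) + \<psi> (h [^] N) - \<psi> ((g \<otimes> h) [^] N) + (3 * K + 2 * defect f)" for N :: nat
  proof -
    have "(g \<otimes> h) [^] N = c \<otimes> w [^] N \<otimes> inv c"
      unfolding conj by (rule conj_nat_pow[OF gh(3,4)])
    then have "\<bar>induced_qm f ((g \<otimes> h) [^] N) - 2 * real N * f (m + n)\<bar> \<le> 2 * defect f"
      using alternating_qm_conj[OF F gh(3), of "w [^] N"] gh(4) by (simp add: Fw)
    then show ?thesis
      using close[of "g [^] N"] close[of "h [^] N"] close[of "(g \<otimes> h) [^] N"] gh
      by (simp add: Fg Fh abs_le_iff algebra_simps)
  qed
  then have "2 * (f m + f n - f (m + n)) \<le> 2 * E"
    by (rule alternating_qm_growth_le[OF \<psi> gh(1,2)])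
  then show ?thesis by simp
qed

lemma defect_le_of_perturbation:
  assumes f: "f \<in> defect_space_Z" and \<beta>: "bounded1 G \<beta>"
    and E: "\<forall>x \<in> carrier G. \<forall>y \<in> carrier G. \<bar>cobound1 G (\<lambda>x. induced_qm f x + \<beta> x) x y\<bar> \<le> E"
    and b: "b \<in> B" "b \<noteq> \<one>"
  shows "defect f \<le> E"
proof (rule defect_le)
  fix m n
  have E0: "0 \<le> E" using E by (meson abs_ge_zero one_closed order_trans)
  show "\<bar>f m + f n - f (m + n)\<bar> \<le> E"
  proof (cases "m = 0 \<or> n = 0 \<or> m + n = 0")
    case True
    then have "f m + f n - f (m + n) = 0"
      using defect_space_Z_zero[OF f] defect_space_Z_uminus[OF f, of m] by (auto simp: add_eq_0_iff)
    then show ?thesis using E0 by simp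
  next
    case False
    have "f m + f n - f (m + n) \<le> E"
      by (rule defect_triple_le_of_perturbation[OF f \<beta> E b]) (use False in auto)
    moreover have "f (- m) + f (- n) - f (- m + - n) \<le> E"
      by (rule defect_triple_le_of_perturbation[OF f \<beta> E b]) (use False in auto)
    moreover have "f (- m + - n) = - f (m + n)"
      using defect_space_Z_uminus[OF f, of "m + n"] by simp
    ultimately show ?thesis
      using defect_space_Z_uminus[OF f] by (simp add: abs_le_iff)
  qed
qed

lemma bcocycle2_cobound_induced_qm:
  assumes "f \<in> defect_space_Z"
  shows "bcocycle2 G (cobound1 G (induced_qm f))"
proof (rule bcocycle2_cobound1)
  show "bounded2 G (cobound1 G (induced_qm f))"
    using alternating_qm_induced_qm[OF assms] unfolding alternating_qm_def bounded2_def by blast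
qed

lemma gromov_norm_cobound_induced_qm:
  assumes f: "f \<in> defect_space_Z" and B: "B \<noteq> {\<one>}"
  shows "gromov_norm G (cobound1 G (induced_qm f)) = defect f"
proof (rule antisym)
  have c: "bounded2 G (cobound1 G (induced_qm f))"
    using bcocycle2_cobound_induced_qm[OF f] by (simp add: bcocycle2_def)
  show "gromov_norm G (cobound1 G (induced_qm f)) \<le> defect f"
    by (rule gromov_norm_le[OF c bounded1_zero])
      (use alternating_qm_induced_qm[OF f] in \<open>simp add: alternating_qm_def cobound1_def\<close>)
  obtain b where b: "b \<in> B" "b \<noteq> \<one>"
    using B subgroup.one_closed[OF subgroup_B] by blast
  show "defect f \<le> gromov_norm G (cobound1 G (induced_qm f))"
  proof (rule le_gromov_norm)
    fix \<beta> assume \<beta>: "bounded1 G \<beta>"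
    show "defect f \<le> sup_norm_perturbed (cobound1 G (induced_qm f)) \<beta>"
      by (rule defect_le_of_perturbation[OF f \<beta> _ b])
        (use abs_le_sup_norm_perturbed[OF c \<beta>] in \<open>simp add: cobound1_def algebra_simps\<close>)
  qed
qed

end

section \<open>Non-separability\<close>

definition signed_indicator_pow3 :: "nat set \<Rightarrow> int \<Rightarrow> real" where
  "signed_indicator_pow3 X n =
     (if n \<in> (\<lambda>k. 3 ^ k) ` X then 1 else if - n \<in> (\<lambda>k. 3 ^ k) ` X then -1 else 0)"

lemma pos_of_mem_pow3_image: "m \<in> (\<lambda>k. (3::int) ^ k) ` X \<Longrightarrow> 0 < m"
  by auto

lemma signed_indicator_pow3_in_defect_space_Z: "signed_indicator_pow3 X \<in> defect_space_Z"
proof -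
  have "signed_indicator_pow3 X (- n) = - signed_indicator_pow3 X n" for n
  proof -
    have "\<not> (n \<in> (\<lambda>k. 3 ^ k) ` X \<and> - n \<in> (\<lambda>k. (3::int) ^ k) ` X)"
      using pos_of_mem_pow3_image[of n X] pos_of_mem_pow3_image[of "- n" X] by linarith
    then show ?thesis by (auto simp: signed_indicator_pow3_def)
  qed
  moreover have "\<bar>signed_indicator_pow3 X n\<bar> \<le> 1" for n
    by (simp add: signed_indicator_pow3_def)
  ultimately show ?thesis by (auto simp: defect_space_Z_def)
qed

text \<open>The witness is n = 3^k for k in exactly one of X, Y: then the difference is \<plusminus>1 at n,
  but vanishes at 2n, which is neither a power of 3 nor negative.\<close>

lemma two_le_defect_diff_signed_indicator_pow3:
  assumes "X \<noteq> Y"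
  shows "2 \<le> defect (\<lambda>n. signed_indicator_pow3 X n - signed_indicator_pow3 Y n)"
proof -
  let ?d = "\<lambda>n. signed_indicator_pow3 X n - signed_indicator_pow3 Y n"
  obtain k where k: "k \<in> X \<longleftrightarrow> k \<notin> Y" using assms by blast
  define n :: int where "n = 3 ^ k"
  have n: "0 < n" by (simp add: n_def)
  have "inj (\<lambda>k. (3::int) ^ k)" by (simp add: inj_def)
  then have "n \<in> (\<lambda>k. 3 ^ k) ` Z \<longleftrightarrow> k \<in> Z" for Z
    by (simp add: n_def inj_image_mem_iff)
  moreover have "- n \<notin> (\<lambda>k. 3 ^ k) ` Z" for Z
    using n pos_of_mem_pow3_image[of "- n" Z] by linarith
  ultimately have "\<bar>?d n\<bar> = 1"
    using k by (auto simp: signed_indicator_pow3_def)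
  moreover have "?d (n + n) = 0"
  proof -
    have "n + n \<noteq> 3 ^ j" for j :: nat
    proof
      assume "n + n = 3 ^ j"
      then have "even ((3::int) ^ j)" by (metis even_add)
      then show False by simp
    qed
    moreover have "- (n + n) \<notin> (\<lambda>k. 3 ^ k) ` Z" for Z
      using n pos_of_mem_pow3_image[of "- (n + n)" Z] by linarith
    ultimately show ?thesis by (auto simp: signed_indicator_pow3_def)
  qed
  ultimately have "\<bar>?d n + ?d n - ?d (n + n)\<bar> = 2" by linarith
  then show ?thesis
    using abs_cobound_le_defect[of ?d n n]
      defect_space_Z_diff[OF signed_indicator_pow3_in_defect_space_Z signed_indicator_pow3_in_defect_space_Z]
    by simp
qed

lemma uncountable_UNIV_nat_set: "uncountable (UNIV :: nat set set)"
  unfolding uncountable_def using Cantors_theorem[of "UNIV :: nat set"] by simp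

context free_product_infinite_order
begin

lemma no_countable_dense_bcocycles:
  assumes B: "B \<noteq> {\<one>}"
  shows "\<not> (\<exists>S. countable S \<and> (\<forall>s \<in> S. bcocycle2 G s) \<and>
              (\<forall>c. bcocycle2 G c \<longrightarrow> (\<forall>\<epsilon>>0. \<exists>s \<in> S. gromov_norm G (\<lambda>g h. c g h - s g h) < \<epsilon>)))"
proof (rule no_countable_dense_if_separated[OF uncountable_UNIV_nat_set, of 2])
  let ?c = "\<lambda>X. cobound1 G (induced_qm (signed_indicator_pow3 X))"
  show "\<forall>X \<in> UNIV. bcocycle2 G (?c X)"
    using bcocycle2_cobound_induced_qm signed_indicator_pow3_in_defect_space_Z by blast
  show "\<forall>X \<in> UNIV. \<forall>Y \<in> UNIV. X \<noteq> Y \<longrightarrow> 2 \<le> gromov_norm G (\<lambda>g h. ?c X g h - ?c Y g h)"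
  proof (intro ballI impI)
    fix X Y :: "nat set" assume "X \<noteq> Y"
    define d where "d = (\<lambda>n. signed_indicator_pow3 X n - signed_indicator_pow3 Y n)"
    have d: "d \<in> defect_space_Z"
      unfolding d_def by (intro defect_space_Z_diff signed_indicator_pow3_in_defect_space_Z)
    have "(\<lambda>g h. ?c X g h - ?c Y g h) = cobound1 G (induced_qm d)"
      using induced_qm_linear[of 1 "signed_indicator_pow3 X" "-1" "signed_indicator_pow3 Y"]
      by (simp add: d_def cobound1_def fun_eq_iff)
    then show "2 \<le> gromov_norm G (\<lambda>g h. ?c X g h - ?c Y g h)"
      using gromov_norm_cobound_induced_qm[OF d B] two_le_defect_diff_signed_indicator_pow3[OF \<open>X \<noteq> Y\<close>]
      by (simp add: d_def)
  qed
qed simp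

end

theorem corollary3p7:
  fixes \<Gamma> :: "('g, 'm) monoid_scheme" and A B :: "'g set"
  assumes "is_free_product \<Gamma> A B"
    and "A \<noteq> {\<one>\<^bsub>\<Gamma>\<^esub>}" and "B \<noteq> {\<one>\<^bsub>\<Gamma>\<^esub>}"
    and "\<exists>a \<in> A. \<forall>n::nat. n > 0 \<longrightarrow> a [^]\<^bsub>\<Gamma>\<^esub> n \<noteq> \<one>\<^bsub>\<Gamma>\<^esub>"
  shows "(\<exists>\<Phi> :: (int \<Rightarrow> real) \<Rightarrow> ('g \<Rightarrow> 'g \<Rightarrow> real).
            (\<forall>f \<in> defect_space_Z. bcocycle2 \<Gamma> (\<Phi> f)) \<and>
            (\<forall>f \<in> defect_space_Z. \<forall>f' \<in> defect_space_Z. \<forall>s t :: real.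
               bcohomologous \<Gamma> (\<Phi> (\<lambda>n. s * f n + t * f' n))
                               (\<lambda>g h. s * \<Phi> f g h + t * \<Phi> f' g h)) \<and>
            (\<forall>f \<in> defect_space_Z. gromov_norm \<Gamma> (\<Phi> f) = defect f))
       \<and> \<not> (\<exists>S. countable S \<and> (\<forall>s \<in> S. bcocycle2 \<Gamma> s) \<and>
              (\<forall>c. bcocycle2 \<Gamma> c \<longrightarrow> (\<forall>\<epsilon>>0. \<exists>s \<in> S.
                  gromov_norm \<Gamma> (\<lambda>g h. c g h - s g h) < \<epsilon>)))"
proof -
  interpret free_product \<Gamma> A B by (rule free_product.intro[OF assms(1)])
  obtain a where a: "a \<in> A" "\<forall>n::nat. n > 0 \<longrightarrow> a [^]\<^bsub>\<Gamma>\<^esub> n \<noteq> \<one>\<^bsub>\<Gamma>\<^esub>"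
    using assms(4) by blast
  have "ord a = 0"
    using a subgroup.subset[OF subgroup_A] by (auto simp: ord_eq_0)
  then interpret free_product_infinite_order \<Gamma> A B a
    using a(1) by unfold_locales
  let ?\<Phi> = "\<lambda>f. cobound1 \<Gamma> (induced_qm f)"
  have "bcohomologous \<Gamma> (?\<Phi> (\<lambda>n. s * f n + t * f' n)) (\<lambda>g h. s * ?\<Phi> f g h + t * ?\<Phi> f' g h)"
    for f f' s t
    unfolding bcohomologous_def
    by (intro exI[of _ "\<lambda>_. 0"] conjI bounded1_zero) (simp add: cobound1_def induced_qm_linear algebra_simps)
  then show ?thesis
    using bcocycle2_cobound_induced_qm gromov_norm_cobound_induced_qm[OF _ assms(3)]
      no_countable_dense_bcocycles[OF assms(3)]
    by (intro conjI exI[of _ ?\<Phi>]) auto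
qed

end
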